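(* For every $\bar g\in W$, $$T\!\left(\frac{\delta\bar g}{\delta u}\right)=\sum_{a,b\in\mathbb{Z}}\frac{\partial\bar g}{\partial p^a_b}\,e^{-i(ay+bx)}.$$
   Context: Let $u_{k_1,k_2}$ ($k_1,k_2\ge0$), $p^a_b$ ($a,b\in\mathbb{Z}$), $\epsilon$, $e^{\pm ix}$, $e^{\pm iy}$ be formal variables. Let $T:\mathbb{C}[[u_{\star,\star},\epsilon]]\to\mathbb{C}[[p^\star_\star,e^{\pm ix},e^{\pm iy},\epsilon]]$ be the ($\epsilon$-linear, multiplicative, continuous) map with $u_{k_1,k_2}\mapsto\partial_x^{k_1}\partial_y^{k_2}\big(\sum_{a,b}p^a_b e^{i(ay+bx)}\big)$, where $\partial_x,\partial_y$ act on $e^{i(ay+bx)}$ as derivatives in $x,y$. For $G$ in the target, $\bar G\in\mathbb{C}[[p^\star_\star,\epsilon]]$ denotes its coefficient of $e^{i0}$. Set $T_0(f)=\overline{T(f)}$ and $W=\mathrm{image}(T_0)$. Define derivations on $\mathbb{C}[[u_{\star,\star},\epsilon]]$ by $\partial_x f=\sum_{k_1,k_2\ge0}u_{k_1+1,k_2}\frac{\partial f}{\partial u_{k_1,k_2}}$ and $\partial_y f=\sum_{k_1,k_2\ge0}u_{k_1,k_2+1}\frac{\partial f}{\partial u_{k_1,k_2}}$. For $\bar g\in W$ choose $f$ with $T_0(f)=\bar g$ and define the variational derivative $\frac{\delta\bar g}{\delta u}=\sum_{k_1,k_2\ge0}(-1)^{k_1+k_2}\partial_x^{k_1}\partial_y^{k_2}\frac{\partial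 f}{\partial u_{k_1,k_2}}$ (independent of the choice of $f$). *)

theory Defs
  imports "HOL-Analysis.Analysis" "HOL-Library.Poly_Mapping" "HOL-Library.Product_Plus"
begin

text \<open>A monomial in the variables u_{k1,k2} is a finitely supported map
  (k1,k2) |-> exponent.  An element f of C[[u_{*,*},eps]] is given by its coefficients:
  f M n is the coefficient of the monomial M * eps^n.\<close>

type_synonym umono = "(nat \<times> nat) \<Rightarrow>\<^sub>0 nat"
type_synonym useries = "umono \<Rightarrow> nat \<Rightarrow> complex"

definition udeg :: "umono \<Rightarrow> nat" where
  "udeg M = (\<Sum>k\<in>Poly_Mapping.keys M. Poly_Mapping.lookup M k)"

text \<open>Power series in infinitely many variables: completion of the polynomial ring
  with respect to the degree filtration, i.e. only finitely many monomials of each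
  degree carry a nonzero coefficient.  (This is exactly what makes T continuous.)\<close>

definition useries_ok :: "useries \<Rightarrow> bool" where
  "useries_ok f \<longleftrightarrow> (\<forall>d n. finite {M. udeg M = d \<and> f M n \<noteq> 0})"

definition du :: "nat \<times> nat \<Rightarrow> useries \<Rightarrow> useries" where
  "du k f = (\<lambda>M n. of_nat (Poly_Mapping.lookup M k + 1) * f (M + Poly_Mapping.single k 1) n)"

definition umulvar :: "nat \<times> nat \<Rightarrow> useries \<Rightarrow> useries" where
  "umulvar j g = (\<lambda>M n. if 0 < Poly_Mapping.lookup M j then g (M - Poly_Mapping.single j 1) n else 0)"

definition dx :: "useries \<Rightarrow> useries" where
  "dx f = (\<lambda>M n. \<Sum>\<^sub>\<infinity>k. umulvar (fst k + 1, snd k) (du k f) M n)"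

definition dy :: "useries \<Rightarrow> useries" where
  "dy f = (\<lambda>M n. \<Sum>\<^sub>\<infinity>k. umulvar (fst k, snd k + 1) (du k f) M n)"

text \<open>variational derivative computed from the representative f:
  sum_{k1,k2} (-1)^(k1+k2) partial_x^k1 partial_y^k2 (df/du_{k1,k2})\<close>
definition vard :: "useries \<Rightarrow> useries" where
  "vard f = (\<lambda>M n. \<Sum>\<^sub>\<infinity>k. (-1) ^ (fst k + snd k) * (dx ^^ fst k) ((dy ^^ snd k) (du k f)) M n)"

text \<open>A monomial in the p^a_b is a finitely supported map (a,b) |-> exponent.
  Coefficients (of p-monomial times eps^n) are Laurent polynomials in e^{ix}, e^{iy};
  the key (al,be) stands for e^{i(al*y + be*x)}.\<close>

type_synonym pmono = "(int \<times> int) \<Rightarrow>\<^sub>0 nat"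
type_synonym lpoly = "(int \<times> int) \<Rightarrow>\<^sub>0 complex"
type_synonym tseries = "pmono \<Rightarrow> nat \<Rightarrow> lpoly"

definition pdeg :: "pmono \<Rightarrow> nat" where
  "pdeg m = (\<Sum>k\<in>Poly_Mapping.keys m. Poly_Mapping.lookup m k)"

definition tmul :: "tseries \<Rightarrow> tseries \<Rightarrow> tseries" where
  "tmul F G = (\<lambda>m n. \<Sum>(q, r)\<in>{(q, r). q + r = m}. \<Sum>j\<le>n. F q j * G r (n - j))"

definition tone :: tseries where
  "tone = (\<lambda>m n. if m = 0 \<and> n = 0 then 1 else 0)"

primrec tpow :: "tseries \<Rightarrow> nat \<Rightarrow> tseries" where
  "tpow F 0 = tone"
| "tpow F (Suc j) = tmul F (tpow F j)"

text \<open>T(u_{k1,k2}) = partial_x^k1 partial_y^k2 (sum_{a,b} p^a_b e^{i(ay+bx)})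
   = sum_{a,b} (i b)^k1 (i a)^k2 p^a_b e^{i(ay+bx)}\<close>
definition Tu :: "nat \<times> nat \<Rightarrow> tseries" where
  "Tu k = (\<lambda>m n. if n = 0 \<and> (\<exists>ab. m = Poly_Mapping.single ab 1)
     then (case (THE ab. m = Poly_Mapping.single ab 1) of (a, b) \<Rightarrow>
             Poly_Mapping.single (a, b) ((\<i> * of_int b) ^ fst k * (\<i> * of_int a) ^ snd k))
     else 0)"

text \<open>T of the monomial M * eps^n' (T is multiplicative and eps-linear)\<close>
definition Tmono :: "umono \<Rightarrow> nat \<Rightarrow> tseries" where
  "Tmono M n' = (\<lambda>m n. if n = n' then
      Finite_Set.fold (\<lambda>k acc. tmul (tpow (Tu k) (Poly_Mapping.lookup M k)) acc) tone (Poly_Mapping.keys M) m 0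
    else 0)"

text \<open>T f, extended by continuity (coefficientwise sum over monomials).
  T f m n e is the coefficient of m * eps^n * e^{i(al*y+be*x)}, e = (al,be).\<close>
definition T :: "useries \<Rightarrow> pmono \<Rightarrow> nat \<Rightarrow> int \<times> int \<Rightarrow> complex" where
  "T f = (\<lambda>m n e. \<Sum>\<^sub>\<infinity>M. f M n * Poly_Mapping.lookup (Tmono M n m n) e)"

definition T0 :: "useries \<Rightarrow> pmono \<Rightarrow> nat \<Rightarrow> complex" where
  "T0 f = (\<lambda>m n. T f m n (0, 0))"

definition dp :: "int \<times> int \<Rightarrow> (pmono \<Rightarrow> nat \<Rightarrow> complex) \<Rightarrow> pmono \<Rightarrow> nat \<Rightarrow> complex" where
  "dp ab g = (\<lambda>m n. of_nat (Poly_Mapping.lookup m ab + 1) * g (m + Poly_Mapping.single ab 1) n)"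

end

theory Submission
  imports Defs
begin

text \<open>
  Since T(u_k) = \<Sum>_{a,b} s_k(a,b) p^a_b e^{i(ay+bx)} with s_k(a,b) = (ib)^{k1} (ia)^{k2}, the
  coefficient of p^m e^{i(\<alpha>y+\<beta>x)} in the product T(u^N) vanishes unless (\<alpha>,\<beta>) is
  the total mode of m. Hence under T the derivations \<partial>_x and \<partial>_y become multiplication by
  i\<beta> and i\<alpha>, and the (\<alpha>,\<beta>)-coefficient of T(\<delta>g/\<delta>u) is
  \<Sum>_k s_k(-\<alpha>,-\<beta>) T(\<partial>f/\<partial>u_k). On the other side, \<partial>/\<partial>p^a_b acts on T(u^N) by
  the Leibniz rule, each factor T(u_k) contributing s_k(a,b) e^{i(ay+bx)}, so the constant term
  of \<partial>T_0(f)/\<partial>p^a_b is the same sum at (a,b) = -(\<alpha>,\<beta>). All infinite sums are locally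
  finite: f has finitely many monomials of each degree, and the total derivative order
  \<Sum>(k1+k2) of these monomials bounds the k occurring in \<delta>g/\<delta>u.
\<close>

abbreviation mvar :: "'a \<Rightarrow> 'a \<Rightarrow>\<^sub>0 nat" where
  "mvar j \<equiv> Poly_Mapping.single j 1"

definition lin_ext :: "('a \<Rightarrow> 'c::comm_semiring_1) \<Rightarrow> ('a \<Rightarrow>\<^sub>0 nat) \<Rightarrow> 'c" where
  "lin_ext \<phi> M = (\<Sum>k\<in>Poly_Mapping.keys M. of_nat (Poly_Mapping.lookup M k) * \<phi> k)"

lemma keys_add_nat:
  "Poly_Mapping.keys (M + N :: 'a \<Rightarrow>\<^sub>0 nat) = Poly_Mapping.keys M \<union> Poly_Mapping.keys N"
  by (auto simp: in_keys_iff lookup_add)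

lemma lin_ext_zero [simp]: "lin_ext \<phi> 0 = 0"
  by (simp add: lin_ext_def)

lemma lin_ext_single [simp]: "lin_ext \<phi> (Poly_Mapping.single k c) = of_nat c * \<phi> k"
  by (cases "c = 0") (simp_all add: lin_ext_def)

lemma lin_ext_add: "lin_ext \<phi> (M + N) = lin_ext \<phi> M + lin_ext \<phi> N"
proof -
  let ?K = "Poly_Mapping.keys M \<union> Poly_Mapping.keys N"
  have sum_K: "lin_ext \<phi> L = (\<Sum>k\<in>?K. of_nat (Poly_Mapping.lookup L k) * \<phi> k)"
    if "Poly_Mapping.keys L \<subseteq> ?K" for L
    unfolding lin_ext_def by (rule sum.mono_neutral_left) (use that in \<open>auto simp: in_keys_iff\<close>)
  show ?thesis
    by (simp add: sum_K keys_add_nat lookup_add distrib_right sum.distrib)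
qed

lemma lin_ext_cong:
  "(\<And>j. j \<in> Poly_Mapping.keys M \<Longrightarrow> \<phi> j = \<psi> j) \<Longrightarrow> lin_ext \<phi> M = lin_ext \<psi> M"
  unfolding lin_ext_def by (rule sum.cong) auto

lemma udeg_eq_lin_ext: "udeg M = lin_ext (\<lambda>_. 1) M"
  by (simp add: udeg_def lin_ext_def)

lemma pdeg_eq_lin_ext: "pdeg m = lin_ext (\<lambda>_. 1) m"
  by (simp add: pdeg_def lin_ext_def)

lemma single_eq_single_iff [simp]:
  "Poly_Mapping.single a c = Poly_Mapping.single b c \<longleftrightarrow> a = b \<or> c = 0"
  by (metis lookup_single_eq lookup_single_not_eq single_zero)

lemma diff_single_add_single [simp]:
  assumes "c \<le> Poly_Mapping.lookup (M :: 'a \<Rightarrow>\<^sub>0 nat) k"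
  shows "M - Poly_Mapping.single k c + Poly_Mapping.single k c = M"
  by (rule poly_mapping_eqI) (use assms in \<open>auto simp: lookup_add lookup_minus lookup_single when_def\<close>)

lemma add_single_diff_single_commute:
  assumes "c \<le> Poly_Mapping.lookup (M :: 'a \<Rightarrow>\<^sub>0 nat) j"
  shows "M + Poly_Mapping.single k d - Poly_Mapping.single j c
    = M - Poly_Mapping.single j c + Poly_Mapping.single k d"
  by (rule poly_mapping_eqI) (use assms in \<open>auto simp: lookup_add lookup_minus lookup_single when_def\<close>)

lemma lin_ext_diff_single:
  assumes "c \<le> Poly_Mapping.lookup (M :: 'a \<Rightarrow>\<^sub>0 nat) l"
  shows "lin_ext \<phi> (M - Poly_Mapping.single l c) + of_nat c * \<phi> l = lin_ext \<phi> M"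
  by (metis assms diff_single_add_single lin_ext_add lin_ext_single)

lemma udeg_add_single: "udeg (M + Poly_Mapping.single k c) = udeg M + c"
  by (simp add: udeg_eq_lin_ext lin_ext_add)

lemma udeg_diff_single_add_single [simp]:
  assumes "c \<le> Poly_Mapping.lookup M l"
  shows "udeg (M - Poly_Mapping.single l c + Poly_Mapping.single k c) = udeg M"
  using lin_ext_diff_single[OF assms, of "\<lambda>_. 1::nat"] by (simp add: udeg_eq_lin_ext lin_ext_add)

lemma monomial_induct [case_names zero add_mvar]:
  assumes "P 0" "\<And>M k. P M \<Longrightarrow> P (M + mvar k)"
  shows "P (N :: 'a \<Rightarrow>\<^sub>0 nat)"
proof (induction "lin_ext (\<lambda>_. 1::nat) N" arbitrary: N rule: less_induct)
  case less
  show ?case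
  proof (cases "N = 0")
    case True
    then show ?thesis using assms(1) by simp
  next
    case False
    then obtain k where "k \<in> Poly_Mapping.keys N"
      by (metis keys_eq_empty all_not_in_conv)
    then have pos: "1 \<le> Poly_Mapping.lookup N k" by (simp add: in_keys_iff)
    have "lin_ext (\<lambda>_. 1::nat) (N - mvar k) < lin_ext (\<lambda>_. 1) N"
      using lin_ext_diff_single[OF pos, of "\<lambda>_. 1::nat"] by simp
    then have "P (N - mvar k + mvar k)" by (intro assms(2) less)
    then show ?thesis by (simp only: diff_single_add_single[OF pos])
  qed
qed

lemma finite_bounded_monomials:
  assumes "finite K"
  shows "finite {M :: 'a \<Rightarrow>\<^sub>0 nat. Poly_Mapping.keys M \<subseteq> K \<and> (\<forall>k. Poly_Mapping.lookup M k \<le> B k)}"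
    (is "finite ?S")
proof -
  have "inj_on (\<lambda>M. restrict (Poly_Mapping.lookup M) K) ?S"
  proof (rule inj_onI)
    fix M N
    assume "M \<in> ?S" "N \<in> ?S" and eq: "restrict (Poly_Mapping.lookup M) K = restrict (Poly_Mapping.lookup N) K"
    have "Poly_Mapping.lookup M k = Poly_Mapping.lookup N k" for k
    proof (cases "k \<in> K")
      case True
      then show ?thesis using fun_cong[OF eq, of k] by simp
    next
      case False
      then have "k \<notin> Poly_Mapping.keys M" "k \<notin> Poly_Mapping.keys N"
        using \<open>M \<in> ?S\<close> \<open>N \<in> ?S\<close> by auto
      then show ?thesis by (simp add: in_keys_iff)
    qed
    then show "M = N" by (rule poly_mapping_eqI)
  qed
  moreover have "(\<lambda>M. restrict (Poly_Mapping.lookup M) K) ` ?S \<subseteq> PiE K (\<lambda>k. {..B k})"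
    by auto
  moreover have "finite (PiE K (\<lambda>k. {..B k}))"
    using assms by (intro finite_PiE) auto
  ultimately show ?thesis
    by (meson finite_imageD finite_subset)
qed

lemma finite_add_decomp_monomial: "finite {(q, r). q + r = (m :: 'a \<Rightarrow>\<^sub>0 nat)}"
proof -
  let ?S = "{q :: 'a \<Rightarrow>\<^sub>0 nat. Poly_Mapping.keys q \<subseteq> Poly_Mapping.keys m
    \<and> (\<forall>k. Poly_Mapping.lookup q k \<le> Poly_Mapping.lookup m k)}"
  have "{(q, r). q + r = m} \<subseteq> ?S \<times> ?S"
    by (auto simp: keys_add_nat lookup_add)
  moreover have "finite (?S \<times> ?S)"
    using finite_bounded_monomials[of "Poly_Mapping.keys m"] by simp
  ultimately show ?thesis by (rule finite_subset)
qed

lemma finite_add_decomp_nat: "finite {(j, j'). j + j' = (n::nat)}"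
  by (rule finite_subset[of _ "{..n} \<times> {..n}"]) auto

lemma finite_add_decomp_prod:
  assumes "\<And>a::'a::monoid_add. finite {(y, z). y + z = a}"
    and "\<And>b::'b::monoid_add. finite {(y, z). y + z = b}"
  shows "finite {(y, z). y + z = (x :: 'a \<times> 'b)}"
proof -
  let ?shuffle = "\<lambda>((q, r), (j, j')). ((q, j), (r, j'))"
  have "{(y, z). y + z = x} \<subseteq> ?shuffle ` ({(q, r). q + r = fst x} \<times> {(j, j'). j + j' = snd x})"
    by (force simp: image_iff)
  then show ?thesis
    using assms by (meson finite_SigmaI finite_imageI finite_subset)
qed

lemma infsum_eq_sum_support:
  fixes f :: "'a \<Rightarrow> complex"
  assumes "finite S" "\<And>x. f x \<noteq> 0 \<Longrightarrow> x \<in> S"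
  shows "(\<Sum>\<^sub>\<infinity>x. f x) = sum f S"
proof -
  have "(\<Sum>\<^sub>\<infinity>x. f x) = infsum f S"
    by (rule infsum_cong_neutral) (use assms in auto)
  then show ?thesis using assms by simp
qed

lemma infsum_swap_finite_support:
  fixes g :: "'a \<Rightarrow> 'b \<Rightarrow> complex"
  assumes "finite P" "\<And>a b. g a b \<noteq> 0 \<Longrightarrow> (a, b) \<in> P"
  shows "(\<Sum>\<^sub>\<infinity>a. \<Sum>\<^sub>\<infinity>b. g a b) = (\<Sum>\<^sub>\<infinity>b. \<Sum>\<^sub>\<infinity>a. g a b)"
proof -
  have "(\<lambda>(a, b). g a b) summable_on P"
    using assms(1) by simp
  then have "(\<lambda>(a, b). g a b) summable_on UNIV \<times> UNIV"
    by (rule summable_on_cong_neutral[THEN iffD1, rotated -1]) (use assms(2) in auto)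
  then show ?thesis
    by (rule infsum_swap_banach)
qed

lemma infsum_lin_ext:
  "(\<Sum>\<^sub>\<infinity>k. of_nat (Poly_Mapping.lookup N k) * \<phi> k) = (lin_ext \<phi> N :: complex)"
  unfolding lin_ext_def by (rule infsum_eq_sum_support) (auto simp: in_keys_iff)

definition conv ::
    "('a::comm_monoid_add \<Rightarrow> 'b::comm_semiring_1) \<Rightarrow> ('a \<Rightarrow> 'b) \<Rightarrow> 'a \<Rightarrow> 'b" where
  "conv A B x = (\<Sum>p\<in>{(y, z). y + z = x}. A (fst p) * B (snd p))"

lemma conv_comm: "conv A B x = conv B A x"
  unfolding conv_def
  by (rule sum.reindex_bij_witness[of _ prod.swap prod.swap]) (auto simp: add.commute mult.commute)

lemma conv_assoc:
  fixes A B C :: "'a::comm_monoid_add \<Rightarrow> 'b::comm_semiring_1"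
  assumes fin: "\<And>x::'a. finite {(y, z). y + z = x}"
  shows "conv (conv A B) C x = conv A (conv B C) x"
proof -
  let ?D = "\<lambda>x::'a. {(y, z). y + z = x}"
  have "conv (conv A B) C x = (\<Sum>p\<in>?D x. \<Sum>q\<in>?D (fst p). A (fst q) * B (snd q) * C (snd p))"
    unfolding conv_def by (simp add: sum_distrib_right)
  also have "\<dots> = (\<Sum>(p, q)\<in>Sigma (?D x) (\<lambda>p. ?D (fst p)). A (fst q) * B (snd q) * C (snd p))"
    by (rule sum.Sigma) (auto intro: fin)
  also have "\<dots> = (\<Sum>(p, q)\<in>Sigma (?D x) (\<lambda>p. ?D (snd p)). A (fst p) * (B (fst q) * C (snd q)))"
    by (rule sum.reindex_bij_witness[of _ "\<lambda>((a, t), (b, c)). ((a + b, c), (a, b))" "\<lambda>((s, c), (a, b)). ((a, b + c), (b, c))"])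
       (auto simp: add.assoc mult.assoc)
  also have "\<dots> = (\<Sum>p\<in>?D x. \<Sum>q\<in>?D (snd p). A (fst p) * (B (fst q) * C (snd q)))"
    by (rule sum.Sigma[symmetric]) (auto intro: fin)
  also have "\<dots> = conv A (conv B C) x"
    unfolding conv_def by (simp add: sum_distrib_left)
  finally show ?thesis .
qed

lemma conv_delta_left:
  fixes A B :: "'a::cancel_comm_monoid_add \<Rightarrow> 'b::comm_semiring_1"
  assumes "finite {(y, z). y + z = a + x}" and "\<And>y. A y = (if y = a then c else 0)"
  shows "conv A B (a + x) = c * B x"
proof -
  have "conv A B (a + x) = (\<Sum>p\<in>{(a, x)}. A (fst p) * B (snd p))"
    unfolding conv_def by (rule sum.mono_neutral_right[OF assms(1)]) (auto simp: assms(2))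
  then show ?thesis by (simp add: assms(2))
qed

lemma finite_add_decomp_series: "finite {(y, z). y + z = (x :: pmono \<times> nat)}"
  by (rule finite_add_decomp_prod[OF finite_add_decomp_monomial finite_add_decomp_nat])

lemma tmul_conv: "tmul F G m n = conv (case_prod F) (case_prod G) (m, n)"
proof -
  have "tmul F G m n = (\<Sum>(p, j)\<in>{(q, r). q + r = m} \<times> {..n}. F (fst p) j * G (snd p) (n - j))"
    unfolding tmul_def by (simp add: sum.cartesian_product case_prod_beta)
  also have "\<dots> = conv (case_prod F) (case_prod G) (m, n)"
    unfolding conv_def
    by (rule sum.reindex_bij_witness[of _ "\<lambda>((q, j), (r, j')). ((q, r), j)" "\<lambda>((q, r), j). ((q, j), (r, n - j))"])
       auto
  finally show ?thesis .
qed

lemma tmul_comm: "tmul F G = tmul G F"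
  by (intro ext) (simp add: tmul_conv conv_comm)

lemma case_prod_tmul: "case_prod (tmul F G) = conv (case_prod F) (case_prod G)"
  by (simp add: tmul_conv fun_eq_iff)

lemma tmul_assoc: "tmul (tmul F G) H = tmul F (tmul G H)"
  by (intro ext) (simp only: tmul_conv case_prod_tmul conv_assoc[OF finite_add_decomp_series])

lemma tmul_left_comm: "tmul F (tmul G H) = tmul G (tmul F H)"
  by (metis tmul_assoc tmul_comm)

lemma tmul_delta_left:
  "tmul (\<lambda>m n. if m = q \<and> n = 0 then c else 0) G (q + m) n = c * G m n"
proof -
  have "tmul (\<lambda>m n. if m = q \<and> n = 0 then c else 0) G (q + m) n
      = conv (\<lambda>(m, n). if m = q \<and> n = 0 then c else 0) (case_prod G) ((q, 0) + (m, n))"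
    by (simp add: tmul_conv)
  also have "\<dots> = c * G m n"
    by (subst conv_delta_left[OF finite_add_decomp_series]) (auto split: if_splits)
  finally show ?thesis .
qed

lemma tmul_tone: "tmul F tone = F"
proof (intro ext)
  fix m n
  have "tone = (\<lambda>m n. if m = 0 \<and> n = 0 then 1 else 0)"
    by (simp add: tone_def fun_eq_iff)
  then show "tmul F tone m n = F m n"
    using tmul_delta_left[of 0 1 F m n] by (simp add: tmul_comm)
qed

lemma tmul_sum_right:
  "tmul F (\<lambda>m n. \<Sum>i\<in>I. c i * G i m n) m n = (\<Sum>i\<in>I. c i * tmul F (G i) m n)"
  unfolding tmul_def
  by (simp add: sum_distrib_left case_prod_beta mult.left_commute sum.swap[of _ I])

lemma lookup_single_mult:
  fixes X :: "('k::ab_group_add) \<Rightarrow>\<^sub>0 ('c::comm_semiring_1)"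
  shows "Poly_Mapping.lookup (Poly_Mapping.single a c * X) b = c * Poly_Mapping.lookup X (b - a)"
proof -
  have "Poly_Mapping.lookup (Poly_Mapping.single a c * X) b
      = (\<Sum>l. (c when a = l) * (\<Sum>q. Poly_Mapping.lookup X q when b = l + q))"
    by (simp add: lookup_mult lookup_single)
  also have "\<dots> = c * (\<Sum>q. Poly_Mapping.lookup X q when b = a + q)"
    by (simp add: when_mult)
  also have "(\<Sum>q. Poly_Mapping.lookup X q when b = a + q) = (\<Sum>q. Poly_Mapping.lookup X q when q = b - a)"
    by (rule Sum_any.cong) (auto simp: when_def algebra_simps)
  finally show ?thesis by simp
qed

lemma lookup_lin_ext:
  fixes \<phi> :: "'a \<Rightarrow> ('k::ab_group_add \<Rightarrow>\<^sub>0 'c::comm_semiring_1)"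
  shows "Poly_Mapping.lookup (lin_ext \<phi> N) e = lin_ext (\<lambda>j. Poly_Mapping.lookup (\<phi> j) e) N"
  by (simp add: lin_ext_def lookup_sum lookup_single_mult flip: single_of_nat)

lemma tmul_support:
  assumes "Poly_Mapping.lookup (tmul A B m n) e \<noteq> 0"
  shows "\<exists>q r j e\<^sub>1 e\<^sub>2. q + r = m \<and> j \<le> n \<and> e\<^sub>1 + e\<^sub>2 = e
    \<and> Poly_Mapping.lookup (A q j) e\<^sub>1 \<noteq> 0 \<and> Poly_Mapping.lookup (B r (n - j)) e\<^sub>2 \<noteq> 0"
proof -
  have "(\<Sum>p\<in>{(q, r). q + r = m}. \<Sum>j\<le>n. Poly_Mapping.lookup (A (fst p) j * B (snd p) (n - j)) e) \<noteq> 0"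
    using assms by (simp add: tmul_def lookup_sum case_prod_unfold)
  then obtain p where p: "p \<in> {(q, r). q + r = m}"
    and nz: "(\<Sum>j\<le>n. Poly_Mapping.lookup (A (fst p) j * B (snd p) (n - j)) e) \<noteq> 0"
    by (rule sum.not_neutral_contains_not_neutral)
  from nz obtain j where j: "j \<in> {..n}"
    and "Poly_Mapping.lookup (A (fst p) j * B (snd p) (n - j)) e \<noteq> 0"
    by (rule sum.not_neutral_contains_not_neutral)
  then have "e \<in> Poly_Mapping.keys (A (fst p) j * B (snd p) (n - j))"
    by (simp add: in_keys_iff)
  then have "e \<in> {e\<^sub>1 + e\<^sub>2 |e\<^sub>1 e\<^sub>2. e\<^sub>1 \<in> Poly_Mapping.keys (A (fst p) j) \<and> e\<^sub>2 \<in> Poly_Mapping.keys (B (snd p) (n - j))}"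
    by (rule subsetD[OF keys_mult])
  then obtain e\<^sub>1 e\<^sub>2 where "e = e\<^sub>1 + e\<^sub>2"
    and "e\<^sub>1 \<in> Poly_Mapping.keys (A (fst p) j)" "e\<^sub>2 \<in> Poly_Mapping.keys (B (snd p) (n - j))"
    by blast
  moreover obtain q r where "p = (q, r)" and "q + r = m"
    using p by blast
  ultimately show ?thesis
    using j by (intro exI[of _ q] exI[of _ r] exI[of _ j] exI[of _ e\<^sub>1] exI[of _ e\<^sub>2]) (simp add: in_keys_iff)
qed

text \<open>This is s_k(a,b) = (ib)^{k1} (ia)^{k2}, the factor by which \<partial>_x^{k1} \<partial>_y^{k2} multiplies
  e^{i(ay+bx)}.\<close>

definition mode_symbol :: "nat \<times> nat \<Rightarrow> int \<times> int \<Rightarrow> complex" where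
  "mode_symbol k ab = (\<i> * of_int (snd ab)) ^ fst k * (\<i> * of_int (fst ab)) ^ snd k"

lemma Tu_mvar: "Tu k (mvar ab) 0 = Poly_Mapping.single ab (mode_symbol k ab)"
proof -
  have "(THE ab'. mvar ab = mvar ab') = ab"
    by (rule the_equality) auto
  then show ?thesis
    unfolding Tu_def by (cases ab) (auto simp: mode_symbol_def)
qed

lemma Tu_eq_0: "\<not> (n = 0 \<and> (\<exists>ab. m = mvar ab)) \<Longrightarrow> Tu k m n = 0"
  unfolding Tu_def by auto

definition Tprod :: "umono \<Rightarrow> tseries" where
  "Tprod M = Finite_Set.fold (\<lambda>k acc. tmul (tpow (Tu k) (Poly_Mapping.lookup M k)) acc) tone
     (Poly_Mapping.keys M)"

lemma Tmono_eq_Tprod: "Tmono M n m n = Tprod M m 0"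
  by (simp add: Tmono_def Tprod_def)

lemma comp_fun_commute_Tprod:
  "comp_fun_commute_on UNIV (\<lambda>k acc. tmul (tpow (Tu k) (Poly_Mapping.lookup M k)) acc)"
  by (simp add: comp_fun_commute_on_def fun_eq_iff tmul_left_comm)

lemma Tprod_zero: "Tprod 0 = tone"
  by (simp add: Tprod_def)

lemma Tprod_add_mvar: "Tprod (M + mvar k) = tmul (Tu k) (Tprod M)"
proof -
  let ?M' = "M + mvar k"
  let ?g = "\<lambda>M k acc. tmul (tpow (Tu k) (Poly_Mapping.lookup M k)) acc"
  have fold_eq: "Finite_Set.fold (?g ?M') tone (Poly_Mapping.keys M - {k})
      = Finite_Set.fold (?g M) tone (Poly_Mapping.keys M - {k})"
    by (rule Finite_Set.fold_cong[OF comp_fun_commute_Tprod comp_fun_commute_Tprod])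
       (auto simp: lookup_add lookup_single when_def fun_eq_iff)
  show ?thesis
  proof (cases "k \<in> Poly_Mapping.keys M")
    case False
    then have "Poly_Mapping.lookup M k = 0" "Poly_Mapping.keys M - {k} = Poly_Mapping.keys M"
      by (auto simp: in_keys_iff)
    moreover have "Poly_Mapping.keys ?M' = insert k (Poly_Mapping.keys M)"
      by (simp add: keys_add_nat)
    ultimately have "Tprod ?M' = ?g ?M' k (Finite_Set.fold (?g M) tone (Poly_Mapping.keys M))"
      unfolding Tprod_def using False fold_eq
      by (simp add: comp_fun_commute_on.fold_insert[OF comp_fun_commute_Tprod])
    then show ?thesis
      using \<open>Poly_Mapping.lookup M k = 0\<close> by (simp add: Tprod_def lookup_add tmul_tone)
  next
    case True
    have "Poly_Mapping.keys ?M' = Poly_Mapping.keys M"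
      using True by (auto simp: keys_add_nat)
    then have "Tprod ?M' = ?g ?M' k (Finite_Set.fold (?g M) tone (Poly_Mapping.keys M - {k}))"
      unfolding Tprod_def using True fold_eq
      by (simp add: comp_fun_commute_on.fold_rec[OF comp_fun_commute_Tprod])
    also have "\<dots> = tmul (Tu k) (?g M k (Finite_Set.fold (?g M) tone (Poly_Mapping.keys M - {k})))"
      by (simp add: lookup_add tmul_assoc)
    also have "?g M k (Finite_Set.fold (?g M) tone (Poly_Mapping.keys M - {k})) = Tprod M"
      unfolding Tprod_def using True by (simp add: comp_fun_commute_on.fold_rec[OF comp_fun_commute_Tprod])
    finally show ?thesis .
  qed
qed

definition total_mode :: "pmono \<Rightarrow> int \<times> int" where
  "total_mode m = (lin_ext fst m, lin_ext snd m)"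

lemma total_mode_add: "total_mode (q + r) = total_mode q + total_mode r"
  by (simp add: total_mode_def lin_ext_add)

lemma total_mode_single: "total_mode (Poly_Mapping.single ab c) = (int c * fst ab, int c * snd ab)"
  by (simp add: total_mode_def)

lemma Tprod_support:
  "Poly_Mapping.lookup (Tprod N m n) e \<noteq> 0 \<Longrightarrow> n = 0 \<and> pdeg m = udeg N \<and> e = total_mode m"
proof (induction N arbitrary: m n e rule: monomial_induct)
  case zero
  then have "m = 0" "n = 0" "e = 0"
    by (auto simp: Tprod_zero tone_def lookup_one when_def split: if_splits)
  then show ?case by (simp add: pdeg_eq_lin_ext udeg_eq_lin_ext total_mode_def zero_prod_def)
next
  case (add_mvar M k)
  from add_mvar.prems obtain q r j e\<^sub>1 e\<^sub>2 where qr: "q + r = m" "j \<le> n" "e\<^sub>1 + e\<^sub>2 = e"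
    and A: "Poly_Mapping.lookup (Tu k q j) e\<^sub>1 \<noteq> 0" and B: "Poly_Mapping.lookup (Tprod M r (n - j)) e\<^sub>2 \<noteq> 0"
    unfolding Tprod_add_mvar by (blast dest: tmul_support)
  from A obtain ab where j: "j = 0" and q: "q = mvar ab"
    by (metis Tu_eq_0 lookup_zero)
  have e\<^sub>1: "e\<^sub>1 = ab"
    using A unfolding q j Tu_mvar by (auto simp: lookup_single when_def split: if_splits)
  from add_mvar.IH[OF B] have "n - j = 0" "pdeg r = udeg M" "e\<^sub>2 = total_mode r" by auto
  then show ?case
    using qr j
    by (auto simp: q e\<^sub>1 total_mode_add total_mode_single pdeg_eq_lin_ext udeg_eq_lin_ext lin_ext_add)
qed

definition Tcoeff :: "umono \<Rightarrow> pmono \<Rightarrow> int \<times> int \<Rightarrow> complex" where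
  "Tcoeff N m e = Poly_Mapping.lookup (Tprod N m 0) e"

lemma Tcoeff_support: "Tcoeff N m e \<noteq> 0 \<Longrightarrow> pdeg m = udeg N \<and> e = total_mode m"
  unfolding Tcoeff_def using Tprod_support by blast

lemma T_eq_infsum_Tcoeff: "T h m n e = (\<Sum>\<^sub>\<infinity>N. h N n * Tcoeff N m e)"
  by (simp add: T_def Tmono_eq_Tprod Tcoeff_def)

lemma T_cmult: "T (\<lambda>M n. c * h M n) m n e = c * T h m n e"
  by (simp add: T_eq_infsum_Tcoeff infsum_cmult_right' mult.assoc)

section \<open>Weight derivations of the target ring\<close>

text \<open>
  Multiplying the p^m-coefficient by an additive weight w(m) is a derivation. With w(m) = i times
  a component of the mode of m it is the image of \<partial>_x or \<partial>_y under T; with w(m) the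
  exponent of p^a_b it is p^a_b \<partial>/\<partial>p^a_b.
\<close>

definition weight_scale :: "(pmono \<Rightarrow> complex) \<Rightarrow> tseries \<Rightarrow> tseries" where
  "weight_scale w F = (\<lambda>m n. Poly_Mapping.single 0 (w m) * F m n)"

lemma weight_scale_tmul:
  assumes add: "\<And>q r. w (q + r) = w q + w r"
  shows "weight_scale w (tmul F G) m n = tmul (weight_scale w F) G m n + tmul F (weight_scale w G) m n"
proof -
  let ?c = "\<lambda>m. Poly_Mapping.single 0 (w m) :: lpoly"
  have split: "?c (q + r) * (F q j * G r (n - j))
      = ?c q * F q j * G r (n - j) + F q j * (?c r * G r (n - j))" for q r j
    by (simp add: add single_add algebra_simps)
  have "weight_scale w (tmul F G) m n = (\<Sum>(q, r)\<in>{(q, r). q + r = m}. \<Sum>j\<le>n. ?c m * (F q j * G r (n - j)))"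
    by (simp add: weight_scale_def tmul_def sum_distrib_left case_prod_beta)
  also have "\<dots> = (\<Sum>(q, r)\<in>{(q, r). q + r = m}. \<Sum>j\<le>n.
      ?c q * F q j * G r (n - j) + F q j * (?c r * G r (n - j)))"
    by (intro sum.cong refl) (auto simp: split)
  also have "\<dots> = tmul (weight_scale w F) G m n + tmul F (weight_scale w G) m n"
    by (simp add: weight_scale_def tmul_def sum.distrib case_prod_beta mult.assoc)
  finally show ?thesis .
qed

lemma weight_scale_Tprod:
  assumes add: "\<And>q r. w (q + r) = w q + w r"
  shows "weight_scale w (Tprod N) m n = lin_ext (\<lambda>j. tmul (weight_scale w (Tu j)) (Tprod (N - mvar j)) m n) N"
proof (induction N arbitrary: m n rule: monomial_induct)
  case zero
  have "w 0 = 0" using add[of 0 0] by simp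
  then show ?case by (simp add: Tprod_zero weight_scale_def tone_def)
next
  case (add_mvar M k)
  let ?D = "\<lambda>j. weight_scale w (Tu j)"
  have IH: "weight_scale w (Tprod M) = (\<lambda>m n. lin_ext (\<lambda>j. tmul (?D j) (Tprod (M - mvar j)) m n) M)"
    using add_mvar.IH by (intro ext)
  have "weight_scale w (Tprod (M + mvar k)) m n
      = tmul (?D k) (Tprod M) m n + tmul (Tu k) (weight_scale w (Tprod M)) m n"
    unfolding Tprod_add_mvar weight_scale_tmul[OF add] ..
  also have "tmul (Tu k) (weight_scale w (Tprod M)) m n
      = lin_ext (\<lambda>j. tmul (Tu k) (tmul (?D j) (Tprod (M - mvar j))) m n) M"
    unfolding IH lin_ext_def by (rule tmul_sum_right)
  also have "\<dots> = lin_ext (\<lambda>j. tmul (?D j) (Tprod (M + mvar k - mvar j)) m n) M"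
  proof (rule lin_ext_cong)
    fix j
    assume "j \<in> Poly_Mapping.keys M"
    then have "1 \<le> Poly_Mapping.lookup M j" by (simp add: in_keys_iff)
    then show "tmul (Tu k) (tmul (?D j) (Tprod (M - mvar j))) m n
        = tmul (?D j) (Tprod (M + mvar k - mvar j)) m n"
      by (simp only: tmul_left_comm[of "Tu k"] Tprod_add_mvar[symmetric] add_single_diff_single_commute)
  qed
  finally show ?case
    by (simp only: lin_ext_add lin_ext_single of_nat_1 mult_1 add_diff_cancel_right' add.commute)
qed

lemma weight_scale_Tu:
  assumes "\<And>ab. w (mvar ab) * mode_symbol k ab = mode_symbol k' ab"
  shows "weight_scale w (Tu k) = Tu k'"
proof (intro ext)
  fix m n
  show "weight_scale w (Tu k) m n = Tu k' m n"
  proof (cases "n = 0 \<and> (\<exists>ab. m = mvar ab)")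
    case True
    then obtain ab where "n = 0" "m = mvar ab" by blast
    then show ?thesis
      by (simp only: weight_scale_def Tu_mvar mult_single add.left_neutral assms)
  qed (simp add: weight_scale_def Tu_eq_0)
qed

lemma Tcoeff_shift:
  assumes add: "\<And>q r. w (q + r) = w q + w r" and Tu: "\<And>k. weight_scale w (Tu k) = Tu (\<sigma> k)"
  shows "lin_ext (\<lambda>j. Tcoeff (N - mvar j + mvar (\<sigma> j)) m e) N = w m * Tcoeff N m e"
proof -
  have "Poly_Mapping.lookup (weight_scale w (Tprod N) m 0) e
      = Poly_Mapping.lookup (lin_ext (\<lambda>j. tmul (Tu (\<sigma> j)) (Tprod (N - mvar j)) m 0) N) e"
    by (simp only: weight_scale_Tprod[OF add] Tu)
  then show ?thesis
    by (simp add: weight_scale_def lookup_single_mult lookup_lin_ext Tcoeff_def Tprod_add_mvar[symmetric])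
qed

lemma Tcoeff_shift_by_mode:
  assumes add: "\<And>a b. \<pi> (a + b) = \<pi> a + \<pi> b"
    and symbol: "\<And>k ab. mode_symbol (\<sigma> k) ab = \<i> * of_int (\<pi> ab) * mode_symbol k ab"
  shows "lin_ext (\<lambda>j. Tcoeff (N - mvar j + mvar (\<sigma> j)) m e) N = \<i> * of_int (\<pi> e) * Tcoeff N m e"
proof -
  let ?w = "\<lambda>m. \<i> * of_int (\<pi> (total_mode m))"
  have "lin_ext (\<lambda>j. Tcoeff (N - mvar j + mvar (\<sigma> j)) m e) N = ?w m * Tcoeff N m e"
  proof (rule Tcoeff_shift)
    show "?w (q + r) = ?w q + ?w r" for q r
      by (simp add: total_mode_add add distrib_left)
    show "weight_scale ?w (Tu k) = Tu (\<sigma> k)" for k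
      by (rule weight_scale_Tu) (simp add: total_mode_single symbol)
  qed
  then show ?thesis
    by (cases "Tcoeff N m e = 0") (auto dest: Tcoeff_support)
qed

lemma weight_scale_exponent_Tu:
  "weight_scale (\<lambda>m. of_nat (Poly_Mapping.lookup m ab)) (Tu k)
    = (\<lambda>m n. if m = mvar ab \<and> n = 0 then Poly_Mapping.single ab (mode_symbol k ab) else 0)"
proof (intro ext)
  fix m n
  show "weight_scale (\<lambda>m. of_nat (Poly_Mapping.lookup m ab)) (Tu k) m n
      = (if m = mvar ab \<and> n = 0 then Poly_Mapping.single ab (mode_symbol k ab) else 0)"
  proof (cases "n = 0 \<and> (\<exists>c. m = mvar c)")
    case True
    then obtain c where "n = 0" "m = mvar c" by blast
    then show ?thesis
      using Tu_mvar[of k c] by (simp add: weight_scale_def mult_single lookup_single when_def)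
  next
    case False
    then have "Tu k m n = 0" "\<not> (m = mvar ab \<and> n = 0)"
      using Tu_eq_0 by blast+
    then show ?thesis by (auto simp: weight_scale_def)
  qed
qed

lemma Tcoeff_pderiv:
  "of_nat (Poly_Mapping.lookup m ab + 1) * Tcoeff N (m + mvar ab) 0
    = lin_ext (\<lambda>j. mode_symbol j ab * Tcoeff (N - mvar j) m (- ab)) N"
proof -
  let ?w = "\<lambda>m. of_nat (Poly_Mapping.lookup m ab) :: complex"
  have "Poly_Mapping.lookup (weight_scale ?w (Tprod N) (mvar ab + m) 0) 0
      = Poly_Mapping.lookup (lin_ext (\<lambda>j. tmul (weight_scale ?w (Tu j)) (Tprod (N - mvar j)) (mvar ab + m) 0) N) 0"
    by (simp only: weight_scale_Tprod lookup_add of_nat_add)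
  also have "\<dots> = lin_ext (\<lambda>j. mode_symbol j ab * Tcoeff (N - mvar j) m (- ab)) N"
    by (simp only: weight_scale_exponent_Tu tmul_delta_left lookup_lin_ext lookup_single_mult Tcoeff_def diff_0)
  finally show ?thesis
    by (simp add: weight_scale_def lookup_single_mult Tcoeff_def lookup_add add.commute del: single_of_nat)
qed

section \<open>Derivations of the source ring under \<open>T\<close>\<close>

lemma infsum_reindex_add_mvar:
  fixes f :: "('a \<Rightarrow>\<^sub>0 nat) \<Rightarrow> complex"
  assumes "\<And>N. Poly_Mapping.lookup N l = 0 \<Longrightarrow> f N = 0"
  shows "(\<Sum>\<^sub>\<infinity>N. f N) = (\<Sum>\<^sub>\<infinity>M. f (M + mvar l))"
proof -
  have "bij_betw (\<lambda>M. M + mvar l) UNIV {N. 0 < Poly_Mapping.lookup N l}"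
    by (rule bij_betw_byWitness[where f' = "\<lambda>N. N - mvar l"]) (auto simp: lookup_add)
  then have "(\<Sum>\<^sub>\<infinity>M. f (M + mvar l)) = infsum f {N. 0 < Poly_Mapping.lookup N l}"
    by (rule infsum_reindex_bij_betw)
  also have "\<dots> = (\<Sum>\<^sub>\<infinity>N. f N)"
    by (rule infsum_cong_neutral) (use assms in auto)
  finally show ?thesis by simp
qed

lemma infsum_umulvar:
  "(\<Sum>\<^sub>\<infinity>M. umulvar l g M n * t M) = (\<Sum>\<^sub>\<infinity>M. g M n * t (M + mvar l))"
proof -
  have "(\<Sum>\<^sub>\<infinity>M. umulvar l g M n * t M) = (\<Sum>\<^sub>\<infinity>M. umulvar l g (M + mvar l) n * t (M + mvar l))"
    by (rule infsum_reindex_add_mvar) (simp add: umulvar_def)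
  then show ?thesis by (simp add: umulvar_def lookup_add)
qed

lemma infsum_du:
  "(\<Sum>\<^sub>\<infinity>M. du k h M n * t M) = (\<Sum>\<^sub>\<infinity>N. of_nat (Poly_Mapping.lookup N k) * h N n * t (N - mvar k))"
proof -
  have "(\<Sum>\<^sub>\<infinity>N. of_nat (Poly_Mapping.lookup N k) * h N n * t (N - mvar k))
      = (\<Sum>\<^sub>\<infinity>M. of_nat (Poly_Mapping.lookup (M + mvar k) k) * h (M + mvar k) n * t (M + mvar k - mvar k))"
    by (rule infsum_reindex_add_mvar) simp
  then show ?thesis by (simp add: du_def lookup_add)
qed

definition shift_deriv :: "(nat \<times> nat \<Rightarrow> nat \<times> nat) \<Rightarrow> useries \<Rightarrow> useries" where
  "shift_deriv \<sigma> h = (\<lambda>M n. \<Sum>\<^sub>\<infinity>k. umulvar (\<sigma> k) (du k h) M n)"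

lemma dx_eq_shift_deriv: "dx = shift_deriv (\<lambda>k. (fst k + 1, snd k))"
  by (simp add: dx_def shift_deriv_def fun_eq_iff)

lemma dy_eq_shift_deriv: "dy = shift_deriv (\<lambda>k. (fst k, snd k + 1))"
  by (simp add: dy_def shift_deriv_def fun_eq_iff)

lemma umulvar_du_nonzero:
  assumes "umulvar l (du k h) M n \<noteq> 0"
  obtains N where "h N n \<noteq> 0" and "k \<in> Poly_Mapping.keys N" and "udeg N = udeg M"
    and "M = N - mvar k + mvar l"
proof -
  from assms have pos: "0 < Poly_Mapping.lookup M l" and nz: "h (M - mvar l + mvar k) n \<noteq> 0"
    by (auto simp: umulvar_def du_def split: if_splits)
  show thesis
  proof (rule that)
    show "h (M - mvar l + mvar k) n \<noteq> 0" by (rule nz)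
    show "k \<in> Poly_Mapping.keys (M - mvar l + mvar k)" by (simp add: in_keys_iff lookup_add)
    show "udeg (M - mvar l + mvar k) = udeg M" using pos by simp
    show "M = M - mvar l + mvar k - mvar k + mvar l" using pos by simp
  qed
qed

lemma shift_deriv_nonzero:
  assumes "shift_deriv \<sigma> h M n \<noteq> 0"
  obtains k N where "h N n \<noteq> 0" and "k \<in> Poly_Mapping.keys N" and "udeg N = udeg M"
    and "M = N - mvar k + mvar (\<sigma> k)"
proof -
  have "\<exists>k. umulvar (\<sigma> k) (du k h) M n \<noteq> 0"
  proof (rule ccontr)
    assume "\<nexists>k. umulvar (\<sigma> k) (du k h) M n \<noteq> 0"
    then have "shift_deriv \<sigma> h M n = 0"
      unfolding shift_deriv_def by (intro infsum_0) blast
    with assms show False by contradiction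
  qed
  then show ?thesis using umulvar_du_nonzero that by metis
qed

lemma useries_ok_du:
  assumes "useries_ok f"
  shows "useries_ok (du k f)"
  unfolding useries_ok_def
proof (intro allI)
  fix d n
  have "{M. udeg M = d \<and> du k f M n \<noteq> 0} \<subseteq> (\<lambda>N. N - mvar k) ` {N. udeg N = Suc d \<and> f N n \<noteq> 0}"
    by (force simp: du_def udeg_add_single intro: image_eqI[where x = "_ + mvar k"])
  moreover have "finite {N. udeg N = Suc d \<and> f N n \<noteq> 0}"
    using assms by (simp add: useries_ok_def)
  ultimately show "finite {M. udeg M = d \<and> du k f M n \<noteq> 0}"
    using finite_subset by blast
qed

lemma useries_ok_shift_deriv:
  assumes "useries_ok h"
  shows "useries_ok (shift_deriv \<sigma> h)"
  unfolding useries_ok_def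
proof (intro allI)
  fix d n
  let ?S = "{N. udeg N = d \<and> h N n \<noteq> 0}"
  have "{M. udeg M = d \<and> shift_deriv \<sigma> h M n \<noteq> 0}
      \<subseteq> (\<lambda>(N, j). N - mvar j + mvar (\<sigma> j)) ` (SIGMA N:?S. Poly_Mapping.keys N)"
  proof
    fix M
    assume "M \<in> {M. udeg M = d \<and> shift_deriv \<sigma> h M n \<noteq> 0}"
    then obtain k N where "h N n \<noteq> 0" "k \<in> Poly_Mapping.keys N" "udeg N = d"
      and "M = N - mvar k + mvar (\<sigma> k)"
      by (auto elim: shift_deriv_nonzero)
    then show "M \<in> (\<lambda>(N, j). N - mvar j + mvar (\<sigma> j)) ` (SIGMA N:?S. Poly_Mapping.keys N)"
      by force
  qed
  moreover have "finite (SIGMA N:?S. Poly_Mapping.keys N)"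
    using assms by (auto simp: useries_ok_def)
  ultimately show "finite {M. udeg M = d \<and> shift_deriv \<sigma> h M n \<noteq> 0}"
    using finite_subset by blast
qed

lemma useries_ok_shift_deriv_pow: "useries_ok h \<Longrightarrow> useries_ok ((shift_deriv \<sigma> ^^ a) h)"
  by (induction a) (simp_all add: useries_ok_shift_deriv)

lemma T_infsum:
  assumes "finite P" and "\<And>M k. \<phi> k M n \<noteq> 0 \<Longrightarrow> Tcoeff M m e \<noteq> 0 \<Longrightarrow> (M, k) \<in> P"
  shows "T (\<lambda>M n. \<Sum>\<^sub>\<infinity>k. \<phi> k M n) m n e = (\<Sum>\<^sub>\<infinity>k. T (\<phi> k) m n e)"
proof -
  have "T (\<lambda>M n. \<Sum>\<^sub>\<infinity>k. \<phi> k M n) m n e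
      = (\<Sum>\<^sub>\<infinity>M. \<Sum>\<^sub>\<infinity>k. \<phi> k M n * Tcoeff M m e)"
    by (simp add: T_eq_infsum_Tcoeff infsum_cmult_left')
  also have "\<dots> = (\<Sum>\<^sub>\<infinity>k. \<Sum>\<^sub>\<infinity>M. \<phi> k M n * Tcoeff M m e)"
    by (rule infsum_swap_finite_support[OF assms(1)]) (use assms(2) in auto)
  also have "\<dots> = (\<Sum>\<^sub>\<infinity>k. T (\<phi> k) m n e)"
    by (simp add: T_eq_infsum_Tcoeff)
  finally show ?thesis .
qed

lemma T_shift_deriv:
  assumes ok: "useries_ok h"
    and shift: "\<And>N. lin_ext (\<lambda>j. Tcoeff (N - mvar j + mvar (\<sigma> j)) m e) N = c * Tcoeff N m e"
  shows "T (shift_deriv \<sigma> h) m n e = c * T h m n e"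
proof -
  let ?S = "{N. udeg N = pdeg m \<and> h N n \<noteq> 0}"
  let ?g = "\<lambda>k N. of_nat (Poly_Mapping.lookup N k) * h N n * Tcoeff (N - mvar k + mvar (\<sigma> k)) m e"
  have finS: "finite (SIGMA N:?S. Poly_Mapping.keys N)"
    using ok by (auto simp: useries_ok_def)
  have "T (shift_deriv \<sigma> h) m n e = (\<Sum>\<^sub>\<infinity>k. T (umulvar (\<sigma> k) (du k h)) m n e)"
    unfolding shift_deriv_def
  proof (rule T_infsum)
    show "finite ((\<lambda>(N, j). (N - mvar j + mvar (\<sigma> j), j)) ` (SIGMA N:?S. Poly_Mapping.keys N))"
      using finS by blast
    fix M k
    assume "umulvar (\<sigma> k) (du k h) M n \<noteq> 0" and "Tcoeff M m e \<noteq> 0"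
    then obtain N where "h N n \<noteq> 0" "k \<in> Poly_Mapping.keys N" "udeg N = pdeg m"
      and "M = N - mvar k + mvar (\<sigma> k)"
      by (auto elim!: umulvar_du_nonzero dest: Tcoeff_support)
    then show "(M, k) \<in> (\<lambda>(N, j). (N - mvar j + mvar (\<sigma> j), j)) ` (SIGMA N:?S. Poly_Mapping.keys N)"
      by force
  qed
  also have "\<dots> = (\<Sum>\<^sub>\<infinity>k. \<Sum>\<^sub>\<infinity>N. ?g k N)"
    by (simp add: T_eq_infsum_Tcoeff infsum_umulvar infsum_du)
  also have "\<dots> = (\<Sum>\<^sub>\<infinity>N. \<Sum>\<^sub>\<infinity>k. ?g k N)"
  proof (rule infsum_swap_finite_support)
    show "finite (prod.swap ` (SIGMA N:?S. Poly_Mapping.keys N))"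
      using finS by blast
    fix k N
    assume "?g k N \<noteq> 0"
    then have "0 < Poly_Mapping.lookup N k" "h N n \<noteq> 0"
      and "udeg (N - mvar k + mvar (\<sigma> k)) = pdeg m"
      by (auto dest: Tcoeff_support)
    then show "(k, N) \<in> prod.swap ` (SIGMA N:?S. Poly_Mapping.keys N)"
      by (auto simp: in_keys_iff image_iff)
  qed
  also have "\<dots> = (\<Sum>\<^sub>\<infinity>N. h N n * lin_ext (\<lambda>j. Tcoeff (N - mvar j + mvar (\<sigma> j)) m e) N)"
    by (simp add: infsum_lin_ext[symmetric] infsum_cmult_right' ac_simps)
  also have "\<dots> = c * T h m n e"
    unfolding shift by (simp add: T_eq_infsum_Tcoeff infsum_cmult_right' ac_simps)
  finally show ?thesis .
qed

lemma T_shift_deriv_pow: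
  assumes "useries_ok h"
    and "\<And>N. lin_ext (\<lambda>j. Tcoeff (N - mvar j + mvar (\<sigma> j)) m e) N = c * Tcoeff N m e"
  shows "T ((shift_deriv \<sigma> ^^ a) h) m n e = c ^ a * T h m n e"
proof (induction a)
  case (Suc a)
  have "T (shift_deriv \<sigma> ((shift_deriv \<sigma> ^^ a) h)) m n e = c * T ((shift_deriv \<sigma> ^^ a) h) m n e"
    by (rule T_shift_deriv[OF useries_ok_shift_deriv_pow[OF assms(1)] assms(2)])
  then show ?case using Suc by simp
qed simp

section \<open>The variational derivative under \<open>T\<close>\<close>

definition deriv_order :: "umono \<Rightarrow> nat" where
  "deriv_order M = lin_ext (\<lambda>k. fst k + snd k) M"

lemma deriv_order_add_single: "deriv_order (M + Poly_Mapping.single k c) = deriv_order M + c * (fst k + snd k)"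
  by (simp add: deriv_order_def lin_ext_add)

lemma shift_deriv_pow_support:
  assumes \<sigma>: "\<And>k. fst (\<sigma> k) + snd (\<sigma> k) = fst k + snd k + 1"
  shows "(shift_deriv \<sigma> ^^ a) h M n \<noteq> 0
    \<Longrightarrow> \<exists>N. h N n \<noteq> 0 \<and> udeg N = udeg M \<and> deriv_order N + a = deriv_order M"
proof (induction a arbitrary: M)
  case (Suc a)
  then obtain k N where N: "(shift_deriv \<sigma> ^^ a) h N n \<noteq> 0" "k \<in> Poly_Mapping.keys N"
    "udeg N = udeg M" "M = N - mvar k + mvar (\<sigma> k)"
    by (auto elim: shift_deriv_nonzero)
  have "deriv_order N + 1 = deriv_order M"
    using lin_ext_diff_single[of 1 N k "\<lambda>k. fst k + snd k"] N(2,4) \<sigma>[of k]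
    by (simp add: deriv_order_def lin_ext_add in_keys_iff)
  then show ?case
    using Suc.IH[OF N(1)] N(3) by fastforce
qed auto

lemma vard_term_support:
  assumes "(dx ^^ fst k) ((dy ^^ snd k) (du k f)) M n \<noteq> 0"
  shows "\<exists>N. f N n \<noteq> 0 \<and> udeg N = udeg M + 1 \<and> deriv_order N = deriv_order M
    \<and> fst k + snd k \<le> deriv_order M"
proof -
  have x: "fst (fst j + 1, snd j) + snd (fst j + 1, snd j) = fst j + snd j + 1"
    and y: "fst (fst j, snd j + 1) + snd (fst j, snd j + 1) = fst j + snd j + 1" for j :: "nat \<times> nat"
    by simp_all
  obtain N\<^sub>1 where N\<^sub>1: "(dy ^^ snd k) (du k f) N\<^sub>1 n \<noteq> 0" "udeg N\<^sub>1 = udeg M"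
    "deriv_order N\<^sub>1 + fst k = deriv_order M"
    using shift_deriv_pow_support[OF x assms[unfolded dx_eq_shift_deriv]] by blast
  obtain N\<^sub>2 where N\<^sub>2: "du k f N\<^sub>2 n \<noteq> 0" "udeg N\<^sub>2 = udeg N\<^sub>1"
    "deriv_order N\<^sub>2 + snd k = deriv_order N\<^sub>1"
    using shift_deriv_pow_support[OF y N\<^sub>1(1)[unfolded dy_eq_shift_deriv]] by blast
  have "f (N\<^sub>2 + mvar k) n \<noteq> 0"
    using N\<^sub>2(1) by (simp add: du_def)
  then show ?thesis
    using N\<^sub>1 N\<^sub>2 by (intro exI[of _ "N\<^sub>2 + mvar k"]) (simp add: udeg_add_single deriv_order_add_single)
qed

lemma finite_total_order_le: "finite {k :: nat \<times> nat. fst k + snd k \<le> W}"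
  by (rule finite_subset[of _ "{..W} \<times> {..W}"]) auto

lemma finite_udeg_deriv_order: "finite {M. udeg M = d \<and> deriv_order M \<le> W}"
proof -
  let ?K = "{k :: nat \<times> nat. fst k + snd k \<le> W}"
  have sub: "{M. udeg M = d \<and> deriv_order M \<le> W}
      \<subseteq> {M. Poly_Mapping.keys M \<subseteq> ?K \<and> (\<forall>k. Poly_Mapping.lookup M k \<le> d)}"
  proof (rule subsetI, rule CollectI, intro conjI allI)
    fix M
    assume "M \<in> {M. udeg M = d \<and> deriv_order M \<le> W}"
    then have d: "udeg M = d" and W: "deriv_order M \<le> W" by auto
    show "Poly_Mapping.keys M \<subseteq> ?K"
    proof
      fix k
      assume k: "k \<in> Poly_Mapping.keys M"
      then have "Poly_Mapping.lookup M k * (fst k + snd k) \<le> deriv_order M"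
        unfolding deriv_order_def lin_ext_def of_nat_id by (intro member_le_sum) auto
      moreover have "fst k + snd k \<le> Poly_Mapping.lookup M k * (fst k + snd k)"
        using k mult_le_mono1[of 1 "Poly_Mapping.lookup M k" "fst k + snd k"] by (simp add: in_keys_iff)
      ultimately have "fst k + snd k \<le> W"
        using W by (meson order_trans)
      then show "k \<in> ?K" by simp
    qed
    show "Poly_Mapping.lookup M k \<le> d" for k
    proof (cases "k \<in> Poly_Mapping.keys M")
      case True
      then show ?thesis
        unfolding d[symmetric] udeg_def by (intro member_le_sum) auto
    qed (simp add: in_keys_iff)
  qed
  show ?thesis
    by (rule finite_subset[OF sub finite_bounded_monomials[OF finite_total_order_le]])
qed

lemma T_vard:
  assumes "useries_ok f"
  shows "T (vard f) m n e
    = (\<Sum>\<^sub>\<infinity>k. (-1) ^ (fst k + snd k) * T ((dx ^^ fst k) ((dy ^^ snd k) (du k f))) m n e)"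
proof -
  let ?S = "{N. udeg N = Suc (pdeg m) \<and> f N n \<noteq> 0}"
  define W where "W = Max (deriv_order ` ?S)"
  have finS: "finite ?S"
    using assms by (simp add: useries_ok_def)
  have "T (vard f) m n e = (\<Sum>\<^sub>\<infinity>k.
      T (\<lambda>M n. (-1) ^ (fst k + snd k) * (dx ^^ fst k) ((dy ^^ snd k) (du k f)) M n) m n e)"
    unfolding vard_def
  proof (rule T_infsum[where \<phi> = "\<lambda>k M n. (-1) ^ (fst k + snd k) * (dx ^^ fst k) ((dy ^^ snd k) (du k f)) M n"])
    show "finite ({M. udeg M = pdeg m \<and> deriv_order M \<le> W} \<times> {k. fst k + snd k \<le> W})"
      using finite_udeg_deriv_order finite_total_order_le by blast
    fix M k
    assume nz: "(-1) ^ (fst k + snd k) * (dx ^^ fst k) ((dy ^^ snd k) (du k f)) M n \<noteq> 0"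
      and "Tcoeff M m e \<noteq> 0"
    then have "udeg M = pdeg m"
      using Tcoeff_support by simp
    from nz have "(dx ^^ fst k) ((dy ^^ snd k) (du k f)) M n \<noteq> 0"
      by simp
    then obtain N where N: "f N n \<noteq> 0" "udeg N = udeg M + 1" "deriv_order N = deriv_order M"
      "fst k + snd k \<le> deriv_order M"
      by (blast dest: vard_term_support)
    with \<open>udeg M = pdeg m\<close> have "N \<in> ?S" by simp
    then have "deriv_order N \<le> W"
      unfolding W_def by (rule Max_ge[OF finite_imageI[OF finS] imageI])
    then show "(M, k) \<in> {M. udeg M = pdeg m \<and> deriv_order M \<le> W} \<times> {k. fst k + snd k \<le> W}"
      using N \<open>udeg M = pdeg m\<close> by auto
  qed
  then show ?thesis by (simp add: T_cmult)
qed

lemma mode_symbol_uminus: "mode_symbol k (- ab) = (-1) ^ (fst k + snd k) * mode_symbol k ab"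
proof -
  have neg: "\<i> * of_int (- x) = - 1 * (\<i> * of_int x)" for x :: int
    by simp
  show ?thesis
    unfolding mode_symbol_def fst_uminus snd_uminus neg power_mult_distrib power_add
    by (simp only: ac_simps)
qed

lemma T_vard_term:
  assumes "useries_ok f"
  shows "(-1) ^ (fst k + snd k) * T ((dx ^^ fst k) ((dy ^^ snd k) (du k f))) m n e
    = mode_symbol k (- e) * T (du k f) m n e"
proof -
  have ok_du: "useries_ok (du k f)"
    using assms by (rule useries_ok_du)
  have ok: "useries_ok ((dy ^^ snd k) (du k f))"
    unfolding dy_eq_shift_deriv using ok_du by (rule useries_ok_shift_deriv_pow)
  have "T ((dx ^^ fst k) ((dy ^^ snd k) (du k f))) m n e
      = (\<i> * of_int (snd e)) ^ fst k * T ((dy ^^ snd k) (du k f)) m n e"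
    unfolding dx_eq_shift_deriv
    by (rule T_shift_deriv_pow[OF ok], rule Tcoeff_shift_by_mode[where \<pi> = snd])
       (simp_all add: mode_symbol_def)
  also have "T ((dy ^^ snd k) (du k f)) m n e = (\<i> * of_int (fst e)) ^ snd k * T (du k f) m n e"
    unfolding dy_eq_shift_deriv
    by (rule T_shift_deriv_pow[OF ok_du], rule Tcoeff_shift_by_mode[where \<pi> = fst])
       (simp_all add: mode_symbol_def)
  finally show ?thesis
    unfolding mode_symbol_uminus by (simp only: mode_symbol_def mult.assoc)
qed

lemma dp_T0:
  assumes "useries_ok f"
  shows "dp ab (T0 f) m n = (\<Sum>\<^sub>\<infinity>k. mode_symbol k ab * T (du k f) m n (- ab))"
proof -
  let ?S = "{N. udeg N = Suc (pdeg m) \<and> f N n \<noteq> 0}"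
  let ?g = "\<lambda>k N. mode_symbol k ab * (of_nat (Poly_Mapping.lookup N k) * f N n * Tcoeff (N - mvar k) m (- ab))"
  have "(\<Sum>\<^sub>\<infinity>k. mode_symbol k ab * T (du k f) m n (- ab)) = (\<Sum>\<^sub>\<infinity>k. \<Sum>\<^sub>\<infinity>N. ?g k N)"
    by (simp add: T_eq_infsum_Tcoeff infsum_du infsum_cmult_right')
  also have "\<dots> = (\<Sum>\<^sub>\<infinity>N. \<Sum>\<^sub>\<infinity>k. ?g k N)"
  proof (rule infsum_swap_finite_support)
    show "finite (prod.swap ` (SIGMA N:?S. Poly_Mapping.keys N))"
      using assms by (auto simp: useries_ok_def)
    fix k N
    assume "?g k N \<noteq> 0"
    then have pos: "0 < Poly_Mapping.lookup N k" and "f N n \<noteq> 0" "udeg (N - mvar k) = pdeg m"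
      by (auto dest: Tcoeff_support)
    moreover have "udeg N = udeg (N - mvar k) + 1"
      using udeg_add_single[of "N - mvar k" k 1] pos by simp
    ultimately show "(k, N) \<in> prod.swap ` (SIGMA N:?S. Poly_Mapping.keys N)"
      by (auto simp: in_keys_iff image_iff)
  qed
  also have "\<dots> = (\<Sum>\<^sub>\<infinity>N. f N n * lin_ext (\<lambda>j. mode_symbol j ab * Tcoeff (N - mvar j) m (- ab)) N)"
  proof -
    have "?g k N = f N n * (of_nat (Poly_Mapping.lookup N k) * (mode_symbol k ab * Tcoeff (N - mvar k) m (- ab)))"
      for k N
      by (simp only: ac_simps)
    then show ?thesis
      by (simp only: infsum_cmult_right' infsum_lin_ext)
  qed
  also have "\<dots> = (\<Sum>\<^sub>\<infinity>N. f N n * (of_nat (Poly_Mapping.lookup m ab + 1) * Tcoeff N (m + mvar ab) 0))"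
    by (simp only: Tcoeff_pderiv)
  also have "\<dots> = of_nat (Poly_Mapping.lookup m ab + 1) * (\<Sum>\<^sub>\<infinity>N. f N n * Tcoeff N (m + mvar ab) 0)"
    by (subst infsum_cmult_right'[symmetric]) (simp only: ac_simps)
  also have "\<dots> = dp ab (T0 f) m n"
    by (simp add: dp_def T0_def T_eq_infsum_Tcoeff zero_prod_def)
  finally show ?thesis by simp
qed

theorem lemma5p1:
  fixes f :: useries and g :: "pmono \<Rightarrow> nat \<Rightarrow> complex"
  assumes "useries_ok f" and "T0 f = g"
  shows "T (vard f) =
    (\<lambda>m n e. \<Sum>\<^sub>\<infinity>ab. (if e = - ab then dp ab g m n else 0))"
proof (intro ext)
  fix m n e
  have "T (vard f) m n e
      = (\<Sum>\<^sub>\<infinity>k. (-1) ^ (fst k + snd k) * T ((dx ^^ fst k) ((dy ^^ snd k) (du k f))) m n e)"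
    by (rule T_vard[OF assms(1)])
  also have "\<dots> = (\<Sum>\<^sub>\<infinity>k. mode_symbol k (- e) * T (du k f) m n (- (- e)))"
    by (simp add: T_vard_term[OF assms(1)])
  also have "\<dots> = dp (- e) g m n"
    unfolding assms(2)[symmetric] by (rule dp_T0[OF assms(1), symmetric])
  also have "\<dots> = (\<Sum>\<^sub>\<infinity>ab. (if e = - ab then dp ab g m n else 0))"
    by (subst infsum_eq_sum_support[of "{- e}"]) (auto split: if_splits)
  finally show "T (vard f) m n e = (\<Sum>\<^sub>\<infinity>ab. (if e = - ab then dp ab g m n else 0))" .
qed

end
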